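(* Let $N\ge1$, $\alpha>0$, and let $u_0\in L^1(\mathbb{R}^N)\cap L^2(\mathbb{R}^N)$ satisfy $\int_{\mathbb{R}^N}u_0(x)\,dx>0$. Let $u$ be the solution of $$\frac{\partial u}{\partial t}+(-\Delta)^\alpha u=0 \text{ on }(0,\infty)\times\mathbb{R}^N,\qquad u(0,x)=u_0(x),$$ i.e. $u(t,x)=(2\pi)^{-N/2}\int_{\mathbb{R}^N}e^{-t|\omega|^{2\alpha}}\widehat{u}_0(\omega)e^{i\omega\cdot x}\,d\omega$. Then for every compact set $K\subseteq\mathbb{R}^N$ there exists $T\ge0$, depending on $u_0$ and $K$, such that $u(t,x)>0$ for all $(t,x)\in[T,\infty)\times K$.
   Context: The Fourier transform is $\widehat{u}_0(\omega)=(2\pi)^{-N/2}\int_{\mathbb{R}^N}u_0(x)e^{-i\omega\cdot x}\,dx$; $(-\Delta)^\alpha$ is the operator with Fourier symbol $|\omega|^{2\alpha}$. *)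

theory Defs
  imports "HOL-Analysis.Analysis"
begin

definition fourier :: "('a::euclidean_space \<Rightarrow> real) \<Rightarrow> 'a \<Rightarrow> complex" where
  "fourier u0 \<omega> =
     complex_of_real ((2 * pi) powr (- real DIM('a) / 2)) *
     (\<integral>x. complex_of_real (u0 x) * exp (- \<i> * complex_of_real (\<omega> \<bullet> x)) \<partial>lborel)"

definition frac_heat_sol :: "real \<Rightarrow> ('a::euclidean_space \<Rightarrow> real) \<Rightarrow> real \<Rightarrow> 'a \<Rightarrow> complex" where
  "frac_heat_sol \<alpha> u0 t x =
     complex_of_real ((2 * pi) powr (- real DIM('a) / 2)) *
     (\<integral>\<omega>. complex_of_real (exp (- t * norm \<omega> powr (2 * \<alpha>))) * fourier u0 \<omega>
            * exp (\<i> * complex_of_real (\<omega> \<bullet> x)) \<partial>lborel)"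

end

theory Submission
  imports Defs "HOL-Probability.Sinc_Integral" "HOL-Real_Asymp.Real_Asymp"
begin

text \<open>The Fourier transform F of u0 is bounded by (2 pi)^(-N/2) * ||u0||_1 and continuous
  with F(0) = (2 pi)^(-N/2) * integral u0 > 0, so for x in the bounded set K the real part of
  F(w) exp(i w . x) exceeds F(0)/2 on a small ball |w| \<le> d. As t grows, the weight
  exp(-t |w|^(2 alpha)) concentrates at w = 0: its mass on |w| < d/2 decays no faster than
  exp(-t (d/2)^(2 alpha)), the weighted tail over |w| > d like exp(-t d^(2 alpha)), so the
  positive contribution wins. The solution is real because F(-w) = cnj (F w).\<close>

lemma exp_neg_le_fact_div_power:
  fixes y :: real
  assumes "y > 0"
  shows "exp (- y) \<le> fact k / y ^ k"
proof -
  have "(\<Sum>n\<in>{k}. y ^ n /\<^sub>R fact n) \<le> (\<Sum>n. y ^ n /\<^sub>R fact n)"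
    using assms by (intro sum_le_suminf summable_exp_generic) auto
  then have "y ^ k / fact k \<le> exp y"
    by (simp add: exp_def divide_inverse mult.commute)
  then show ?thesis
    using assms by (simp add: exp_minus field_simps)
qed

lemma exp_neg_abs_powr_le_inverse_1_plus_square:
  fixes s \<alpha> :: real
  assumes s: "s > 0" and \<alpha>: "\<alpha> > 0"
  obtains C where "\<And>r::real. exp (- s * \<bar>r\<bar> powr (2 * \<alpha>)) \<le> C * inverse (1 + r\<^sup>2)"
proof -
  define k where "k = nat \<lceil>1 / \<alpha>\<rceil>"
  have "1 / \<alpha> \<le> real k"
    unfolding k_def by linarith
  then have k: "2 \<le> 2 * \<alpha> * real k"
    using \<alpha> by (simp add: field_simps)
  define C where "C = 2 * max 1 (fact k / s ^ k)"
  have "exp (- s * \<bar>r\<bar> powr (2 * \<alpha>)) \<le> C * inverse (1 + r\<^sup>2)" for r :: real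
  proof (cases "\<bar>r\<bar> \<ge> 1")
    case True
    have "r\<^sup>2 = \<bar>r\<bar> powr 2"
      using True by (simp add: powr_numeral)
    also have "\<dots> \<le> \<bar>r\<bar> powr (2 * \<alpha> * real k)"
      using True k by (intro powr_mono) auto
    also have "\<dots> = (\<bar>r\<bar> powr (2 * \<alpha>)) ^ k"
      using True by (simp add: powr_powr[symmetric] powr_realpow)
    finally have "s ^ k * r\<^sup>2 \<le> (s * \<bar>r\<bar> powr (2 * \<alpha>)) ^ k"
      using s by (simp add: power_mult_distrib)
    then have "fact k / (s * \<bar>r\<bar> powr (2 * \<alpha>)) ^ k \<le> fact k / (s ^ k * r\<^sup>2)"
      using s True by (intro divide_left_mono) auto
    moreover have "exp (- (s * \<bar>r\<bar> powr (2 * \<alpha>))) \<le> fact k / (s * \<bar>r\<bar> powr (2 * \<alpha>)) ^ k"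
      using s True by (intro exp_neg_le_fact_div_power) auto
    moreover have "fact k / (s ^ k * r\<^sup>2) \<le> C * inverse (1 + r\<^sup>2)"
    proof -
      have "1 \<le> r\<^sup>2"
        using True one_le_power[of "\<bar>r\<bar>" 2] by simp
      then have "inverse (r\<^sup>2) \<le> 2 * inverse (1 + r\<^sup>2)"
        by (simp add: inverse_eq_divide divide_simps)
      then have "fact k / s ^ k * inverse (r\<^sup>2) \<le> fact k / s ^ k * (2 * inverse (1 + r\<^sup>2))"
        using s by (intro mult_left_mono) auto
      also have "\<dots> = 2 * (fact k / s ^ k) * inverse (1 + r\<^sup>2)"
        by (simp only: ac_simps)
      also have "\<dots> \<le> C * inverse (1 + r\<^sup>2)"
        unfolding C_def by (intro mult_right_mono) auto
      finally show ?thesis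
        by (simp add: divide_inverse mult.assoc)
    qed
    ultimately show ?thesis
      by simp
  next
    case False
    then have "r\<^sup>2 \<le> 1"
      by (simp add: abs_square_le_1)
    have "exp (- s * \<bar>r\<bar> powr (2 * \<alpha>)) \<le> 1"
      using s by simp
    also have "1 \<le> 2 * inverse (1 + r\<^sup>2)"
      using \<open>r\<^sup>2 \<le> 1\<close> by (simp add: field_simps add_pos_nonneg)
    also have "\<dots> \<le> C * inverse (1 + r\<^sup>2)"
      unfolding C_def by (intro mult_right_mono) auto
    finally show ?thesis .
  qed
  then show ?thesis
    using that by blast
qed

lemma nn_integral_exp_neg_abs_powr_finite:
  fixes s \<alpha> :: real
  assumes "s > 0" and "\<alpha> > 0"
  shows "(\<integral>\<^sup>+r. ennreal (exp (- s * \<bar>r\<bar> powr (2 * \<alpha>))) \<partial>lborel) < \<infinity>"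
proof -
  obtain C where C: "\<And>r::real. exp (- s * \<bar>r\<bar> powr (2 * \<alpha>)) \<le> C * inverse (1 + r\<^sup>2)"
    using exp_neg_abs_powr_le_inverse_1_plus_square[OF assms] by blast
  have "C \<ge> 0"
    using C[of 0] by simp
  have "integrable lborel (\<lambda>r::real. C * inverse (1 + r\<^sup>2))"
    using integrable_inverse_1_plus_square unfolding set_integrable_def einterval_eq_UNIV
    by (intro integrable_mult_right) simp
  then have "(\<integral>\<^sup>+r. ennreal (C * inverse (1 + r\<^sup>2)) \<partial>lborel) < \<infinity>"
    using \<open>C \<ge> 0\<close> by (subst nn_integral_eq_integral) (auto simp: add_pos_nonneg)
  moreover have "(\<integral>\<^sup>+r. ennreal (exp (- s * \<bar>r\<bar> powr (2 * \<alpha>))) \<partial>lborel)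
      \<le> (\<integral>\<^sup>+r. ennreal (C * inverse (1 + r\<^sup>2)) \<partial>lborel)"
    using C by (intro nn_integral_mono) (simp add: ennreal_leI)
  ultimately show ?thesis
    by (simp add: order_le_less_trans)
qed

text \<open>The weight exp(-t |w|^(2 alpha)) is dominated by a product of one-dimensional
  weights, since |w . b| \<le> |w| for every basis vector b.\<close>

lemma integrable_exp_neg_norm_powr:
  fixes t \<alpha> :: real
  assumes t: "t > 0" and \<alpha>: "\<alpha> > 0"
  shows "integrable lborel (\<lambda>\<omega>::'a::euclidean_space. exp (- t * norm \<omega> powr (2 * \<alpha>)))"
proof (rule integrableI_bounded)
  define s where "s = t / real DIM('a)"
  have s: "s > 0"
    unfolding s_def using t by auto
  have "exp (- t * norm \<omega> powr (2 * \<alpha>)) \<le> (\<Prod>b\<in>Basis. exp (- s * \<bar>\<omega> \<bullet> b\<bar> powr (2 * \<alpha>)))"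
    for \<omega> :: 'a
  proof -
    have "(\<Sum>b\<in>Basis. s * \<bar>\<omega> \<bullet> b\<bar> powr (2 * \<alpha>)) \<le> (\<Sum>b\<in>(Basis::'a set). s * norm \<omega> powr (2 * \<alpha>))"
      using s \<alpha> by (intro sum_mono mult_left_mono powr_mono2 Basis_le_norm) auto
    also have "\<dots> = t * norm \<omega> powr (2 * \<alpha>)"
      unfolding s_def by simp
    finally show ?thesis
      by (simp add: exp_sum[symmetric] sum_negf)
  qed
  then have "(\<integral>\<^sup>+\<omega>. ennreal (norm (exp (- t * norm (\<omega>::'a) powr (2 * \<alpha>)))) \<partial>lborel)
      \<le> (\<integral>\<^sup>+\<omega>. (\<Prod>b\<in>Basis. ennreal (exp (- s * \<bar>(\<omega>::'a) \<bullet> b\<bar> powr (2 * \<alpha>)))) \<partial>lborel)"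
    by (intro nn_integral_mono) (simp add: prod_ennreal ennreal_leI)
  also have "\<dots> = (\<Prod>b\<in>(Basis::'a set). \<integral>\<^sup>+r. ennreal (exp (- s * \<bar>r\<bar> powr (2 * \<alpha>))) \<partial>lborel)"
    by (rule nn_integral_lborel_prod) auto
  also have "\<dots> < \<infinity>"
    using nn_integral_exp_neg_abs_powr_finite[OF s \<alpha>] by (simp add: power_less_top_ennreal)
  finally show "(\<integral>\<^sup>+\<omega>. ennreal (norm (exp (- t * norm (\<omega>::'a) powr (2 * \<alpha>)))) \<partial>lborel) < \<infinity>" .
qed simp

lemma integral_lborel_reflect:
  fixes f :: "'a::euclidean_space \<Rightarrow> 'b::{banach, second_countable_topology}"
  assumes "f \<in> borel_measurable borel"
  shows "(\<integral>x. f (- x) \<partial>lborel) = (\<integral>x. f x \<partial>lborel)"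
proof -
  have "(lborel :: 'a measure) = density (distr lborel borel (\<lambda>x. 0 + (-1::real) *\<^sub>R x)) (\<lambda>_. \<bar>-1::real\<bar> ^ DIM('a))"
    by (rule lborel_affine) simp
  then have "distr lborel borel uminus = (lborel :: 'a measure)"
    by (simp add: density_1)
  then have "(\<integral>x. f x \<partial>lborel) = (\<integral>x. f x \<partial>distr lborel borel uminus)"
    by simp
  also have "\<dots> = (\<integral>x. f (- x) \<partial>lborel)"
    using assms by (intro integral_distr) auto
  finally show ?thesis
    by simp
qed

lemma continuous_on_parametric_integral:
  fixes f :: "'b::metric_space \<Rightarrow> 'x \<Rightarrow> 'c::{banach, second_countable_topology}"
  assumes "integrable M g" and "\<And>w x. norm (f w x) \<le> g x"
    and "\<And>w. f w \<in> borel_measurable M" and "\<And>x. continuous_on UNIV (\<lambda>w. f w x)"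
  shows "continuous_on UNIV (\<lambda>w. \<integral>x. f w x \<partial>M)"
  unfolding continuous_on_eq_continuous_at[OF open_UNIV]
proof (intro ballI continuous_at_sequentiallyI)
  fix a :: 'b and u :: "nat \<Rightarrow> 'b"
  assume u: "u \<longlonglongrightarrow> a"
  have "(\<lambda>n. f (u n) x) \<longlonglongrightarrow> f a x" for x
    using assms(4) by (intro isCont_tendsto_compose[OF _ u]) (simp add: continuous_on_eq_continuous_at)
  then show "(\<lambda>n. \<integral>x. f (u n) x \<partial>M) \<longlonglongrightarrow> (\<integral>x. f a x \<partial>M)"
    using assms(1-3) by (intro integral_dominated_convergence[where w=g]) auto
qed

lemma norm_fourier_integrand:
  "norm (complex_of_real (u0 x) * exp (- \<i> * complex_of_real (\<omega> \<bullet> x))) = \<bar>u0 x\<bar>"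
  by (simp add: norm_mult norm_exp_eq_Re)

lemma continuous_on_fourier:
  fixes u0 :: "'a::euclidean_space \<Rightarrow> real"
  assumes "integrable lborel u0"
  shows "continuous_on UNIV (fourier u0)"
proof -
  have "continuous_on UNIV
      (\<lambda>\<omega>::'a. \<integral>x. complex_of_real (u0 x) * exp (- \<i> * complex_of_real (\<omega> \<bullet> x)) \<partial>lborel)"
  proof (rule continuous_on_parametric_integral[where g="\<lambda>x. \<bar>u0 x\<bar>"])
    show "integrable lborel (\<lambda>x. \<bar>u0 x\<bar>)"
      using assms by (rule integrable_abs)
    show "(\<lambda>x. complex_of_real (u0 x) * exp (- \<i> * complex_of_real (\<omega> \<bullet> x))) \<in> borel_measurable lborel"
      for \<omega> :: 'a
      using borel_measurable_integrable[OF assms] by measurable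
  qed (simp_all only: norm_fourier_integrand continuous_intros)
  then show ?thesis
    unfolding fourier_def[abs_def] by (intro continuous_intros)
qed

lemma borel_measurable_fourier:
  fixes u0 :: "'a::euclidean_space \<Rightarrow> real"
  assumes "integrable lborel u0"
  shows "fourier u0 \<in> borel_measurable borel"
  using continuous_on_fourier[OF assms] by (rule borel_measurable_continuous_onI)

lemma norm_fourier_le:
  fixes u0 :: "'a::euclidean_space \<Rightarrow> real"
  shows "norm (fourier u0 \<omega>) \<le> (2 * pi) powr (- real DIM('a) / 2) * (\<integral>x. \<bar>u0 x\<bar> \<partial>lborel)"
proof -
  have "norm (\<integral>x. complex_of_real (u0 x) * exp (- \<i> * complex_of_real (\<omega> \<bullet> x)) \<partial>lborel)
      \<le> (\<integral>x. norm (complex_of_real (u0 x) * exp (- \<i> * complex_of_real (\<omega> \<bullet> x))) \<partial>lborel)"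
    by (rule integral_norm_bound)
  then show ?thesis
    unfolding fourier_def norm_mult norm_fourier_integrand by (simp add: mult_left_mono)
qed

lemma fourier_0:
  fixes u0 :: "'a::euclidean_space \<Rightarrow> real"
  shows "fourier u0 0 = complex_of_real ((2 * pi) powr (- real DIM('a) / 2) * (\<integral>x. u0 x \<partial>lborel))"
  unfolding fourier_def by (simp add: integral_complex_of_real)

lemma fourier_uminus:
  fixes u0 :: "'a::euclidean_space \<Rightarrow> real"
  shows "fourier u0 (- \<omega>) = cnj (fourier u0 \<omega>)"
proof -
  have integrand: "(\<lambda>x. complex_of_real (u0 x) * exp (- \<i> * complex_of_real ((- \<omega>) \<bullet> x)))
      = (\<lambda>x. cnj (complex_of_real (u0 x) * exp (- \<i> * complex_of_real (\<omega> \<bullet> x))))"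
  proof
    fix x
    have "cnj (complex_of_real (u0 x) * exp (- \<i> * complex_of_real (\<omega> \<bullet> x)))
        = complex_of_real (u0 x) * exp (cnj (- \<i> * complex_of_real (\<omega> \<bullet> x)))"
      by (simp only: complex_cnj_mult complex_cnj_complex_of_real exp_cnj)
    also have "cnj (- \<i> * complex_of_real (\<omega> \<bullet> x)) = - \<i> * complex_of_real ((- \<omega>) \<bullet> x)"
      by (simp add: inner_minus_left)
    finally show "complex_of_real (u0 x) * exp (- \<i> * complex_of_real ((- \<omega>) \<bullet> x))
        = cnj (complex_of_real (u0 x) * exp (- \<i> * complex_of_real (\<omega> \<bullet> x)))" ..
  qed
  show ?thesis
    unfolding fourier_def integrand Bochner_Integration.integral_cnj
    by (simp only: complex_cnj_mult complex_cnj_complex_of_real)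
qed

lemma Re_mult_exp_inner_ge_half:
  fixes F :: "'a::euclidean_space \<Rightarrow> complex" and A R :: real
  assumes "isCont F 0" and "F 0 = complex_of_real A" and "A > 0" and "R > 0"
  obtains \<delta> where "\<delta> > 0"
    and "\<And>\<omega> x. norm \<omega> \<le> \<delta> \<Longrightarrow> norm x \<le> R \<Longrightarrow> A / 2 \<le> Re (F \<omega> * exp (\<i> * complex_of_real (\<omega> \<bullet> x)))"
proof -
  obtain \<delta>1 where "\<delta>1 > 0" and \<delta>1: "\<And>\<omega>. norm \<omega> < \<delta>1 \<Longrightarrow> norm (F \<omega> - F 0) < A / 4"
    using assms(1,3) unfolding continuous_at_eps_delta dist_norm
    by (metis diff_zero divide_pos_pos zero_less_numeral)
  define \<delta> where "\<delta> = min (\<delta>1 / 2) (1 / (4 * R))"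
  have "\<delta> > 0" and "\<delta> < \<delta>1" and "\<delta> * R \<le> 1 / 4"
    unfolding \<delta>_def using \<open>\<delta>1 > 0\<close> \<open>R > 0\<close> by (auto simp: min_def field_simps)
  have "A / 2 \<le> Re (F \<omega> * exp (\<i> * complex_of_real (\<omega> \<bullet> x)))"
    if \<omega>: "norm \<omega> \<le> \<delta>" and x: "norm x \<le> R" for \<omega> x
  proof -
    define E where "E = exp (\<i> * complex_of_real (\<omega> \<bullet> x))"
    have "norm (E - 1) = 2 * \<bar>sin ((\<omega> \<bullet> x) / 2)\<bar>"
      unfolding E_def by (rule dist_exp_i_1)
    also have "\<dots> \<le> \<bar>\<omega> \<bullet> x\<bar>"
      using abs_sin_x_le_abs_x[of "(\<omega> \<bullet> x) / 2"] by simp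
    also have "\<dots> \<le> norm \<omega> * norm x"
      by (rule Cauchy_Schwarz_ineq2)
    also have "\<dots> \<le> \<delta> * R"
      using \<omega> x \<open>\<delta> > 0\<close> by (intro mult_mono) auto
    finally have E: "norm (E - 1) \<le> 1 / 4"
      using \<open>\<delta> * R \<le> 1 / 4\<close> by linarith
    have F: "norm (F \<omega> - complex_of_real A) \<le> A / 4"
      using \<delta>1[of \<omega>] \<omega> \<open>\<delta> < \<delta>1\<close> assms(2) by auto
    have "F \<omega> * E - complex_of_real A = (F \<omega> - complex_of_real A) * E + complex_of_real A * (E - 1)"
      by (simp add: algebra_simps)
    then have "norm (F \<omega> * E - complex_of_real A) \<le> norm (F \<omega> - complex_of_real A) * norm E + A * norm (E - 1)"
      using \<open>A > 0\<close> by (metis norm_triangle_ineq norm_mult norm_of_real abs_of_pos)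
    also have "\<dots> \<le> A / 4 + A * (1 / 4)"
      using E F \<open>A > 0\<close> by (intro add_mono mult_left_mono) (auto simp: E_def)
    finally have "norm (F \<omega> * E - complex_of_real A) \<le> A / 2"
      by simp
    then show ?thesis
      using abs_Re_le_cmod[of "F \<omega> * E - complex_of_real A"] unfolding E_def by simp
  qed
  then show ?thesis
    using that \<open>\<delta> > 0\<close> by blast
qed

lemma exp_neg_norm_powr_mult_ge:
  fixes \<phi> :: "'a::euclidean_space \<Rightarrow> real" and \<alpha> \<delta> a M t :: real
  assumes "\<alpha> > 0" "\<delta> > 0" "a \<ge> 0" "t \<ge> 1"
    and bounded: "\<And>\<omega>. \<bar>\<phi> \<omega>\<bar> \<le> M" and near: "\<And>\<omega>. norm \<omega> \<le> \<delta> \<Longrightarrow> a \<le> \<phi> \<omega>"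
  shows "a * exp (- t * (\<delta> / 2) powr (2 * \<alpha>)) * indicator (ball 0 (\<delta> / 2)) \<omega>
           - M * exp (- (t - 1) * \<delta> powr (2 * \<alpha>)) * exp (- (norm \<omega> powr (2 * \<alpha>)))
         \<le> exp (- t * norm \<omega> powr (2 * \<alpha>)) * \<phi> \<omega>"
    (is "?inner - ?tail \<le> _")
proof -
  have "M \<ge> 0"
    using bounded[of \<omega>] by linarith
  then have "?tail \<ge> 0"
    by simp
  consider "norm \<omega> < \<delta> / 2" | "\<delta> / 2 \<le> norm \<omega>" "norm \<omega> \<le> \<delta>" | "\<delta> < norm \<omega>"
    by linarith
  then show ?thesis
  proof cases
    case 1
    then have "norm \<omega> powr (2 * \<alpha>) \<le> (\<delta> / 2) powr (2 * \<alpha>)"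
      using \<open>\<alpha> > 0\<close> by (intro powr_mono2) auto
    then have "exp (- t * (\<delta> / 2) powr (2 * \<alpha>)) \<le> exp (- t * norm \<omega> powr (2 * \<alpha>))"
      using \<open>t \<ge> 1\<close> by simp
    moreover have "a \<le> \<phi> \<omega>"
      using 1 \<open>\<delta> > 0\<close> by (intro near) linarith
    ultimately have "a * exp (- t * (\<delta> / 2) powr (2 * \<alpha>)) \<le> \<phi> \<omega> * exp (- t * norm \<omega> powr (2 * \<alpha>))"
      using \<open>a \<ge> 0\<close> by (intro mult_mono) auto
    then have "?inner \<le> exp (- t * norm \<omega> powr (2 * \<alpha>)) * \<phi> \<omega>"
      using 1 by (simp add: mult.commute)
    then show ?thesis
      using \<open>?tail \<ge> 0\<close> by linarith
  next
    case 2
    then have "0 \<le> exp (- t * norm \<omega> powr (2 * \<alpha>)) * \<phi> \<omega>"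
      using near[of \<omega>] \<open>a \<ge> 0\<close> by simp
    then show ?thesis
      using 2 \<open>?tail \<ge> 0\<close> by simp
  next
    case 3
    have "- M \<le> \<phi> \<omega>"
      using bounded[of \<omega>] by linarith
    then have lower: "exp (- t * norm \<omega> powr (2 * \<alpha>)) * (- M) \<le> exp (- t * norm \<omega> powr (2 * \<alpha>)) * \<phi> \<omega>"
      by (rule mult_left_mono) simp
    have "\<delta> powr (2 * \<alpha>) \<le> norm \<omega> powr (2 * \<alpha>)"
      using 3 \<open>\<alpha> > 0\<close> \<open>\<delta> > 0\<close> by (intro powr_mono2) auto
    then have "(t - 1) * \<delta> powr (2 * \<alpha>) \<le> (t - 1) * norm \<omega> powr (2 * \<alpha>)"
      using \<open>t \<ge> 1\<close> by (intro mult_left_mono) auto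
    then have "exp (- t * norm \<omega> powr (2 * \<alpha>))
        \<le> exp (- (t - 1) * \<delta> powr (2 * \<alpha>)) * exp (- (norm \<omega> powr (2 * \<alpha>)))"
      by (simp add: exp_add[symmetric] algebra_simps)
    then have "M * exp (- t * norm \<omega> powr (2 * \<alpha>)) \<le> ?tail"
      using \<open>M \<ge> 0\<close> by (simp add: mult.assoc mult_left_mono)
    with lower show ?thesis
      using 3 \<open>\<delta> > 0\<close> by (simp add: mult.commute)
  qed
qed

text \<open>The comparison function of the previous lemma has integral
  a * exp(-t (d/2)^(2 alpha)) * |ball 0 (d/2)| - M * exp(-(t - 1) d^(2 alpha)) * C,
  whose first term decays more slowly.\<close>

lemma eventually_integral_exp_neg_norm_powr_mult_pos:
  fixes \<alpha> \<delta> a M :: real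
  assumes "\<alpha> > 0" "\<delta> > 0" "a > 0"
  shows "\<forall>\<^sub>F t in at_top. \<forall>\<phi>::'a::euclidean_space \<Rightarrow> real. \<phi> \<in> borel_measurable lborel \<longrightarrow>
           (\<forall>\<omega>. \<bar>\<phi> \<omega>\<bar> \<le> M) \<longrightarrow> (\<forall>\<omega>. norm \<omega> \<le> \<delta> \<longrightarrow> a \<le> \<phi> \<omega>) \<longrightarrow>
           0 < (\<integral>\<omega>. exp (- t * norm \<omega> powr (2 * \<alpha>)) * \<phi> \<omega> \<partial>lborel)"
proof -
  define a0 where "a0 = (\<delta> / 2) powr (2 * \<alpha>)"
  define b0 where "b0 = \<delta> powr (2 * \<alpha>)"
  define V where "V = measure lborel (ball (0::'a) (\<delta> / 2))"
  define C where "C = (\<integral>\<omega>. exp (- (norm (\<omega>::'a) powr (2 * \<alpha>))) \<partial>lborel)"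
  have "a0 < b0"
    unfolding a0_def b0_def using assms by (intro powr_less_mono2) auto
  have "V > 0"
    unfolding V_def using \<open>\<delta> > 0\<close> by (simp add: content_ball_pos)
  have "((\<lambda>t. M * C * exp b0 * exp (- t * (b0 - a0))) \<longlongrightarrow> 0) at_top"
    using \<open>a0 < b0\<close> by real_asymp
  then have "\<forall>\<^sub>F t in at_top. M * C * exp b0 * exp (- t * (b0 - a0)) < a * V"
    using \<open>a > 0\<close> \<open>V > 0\<close> by (intro order_tendstoD) auto
  with eventually_ge_at_top[of 1] show ?thesis
  proof eventually_elim
    case (elim t)
    have integrable_weight: "integrable lborel (\<lambda>\<omega>::'a. exp (- s * norm \<omega> powr (2 * \<alpha>)))"
      if "s > 0" for s
      using that \<open>\<alpha> > 0\<close> by (rule integrable_exp_neg_norm_powr)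
    have ball_finite: "emeasure lborel (ball (0::'a) (\<delta> / 2)) < \<infinity>"
      by (rule emeasure_lborel_ball_finite)
    define g where "g \<omega> = a * exp (- t * a0) * indicator (ball (0::'a) (\<delta> / 2)) \<omega>
      - M * exp (- (t - 1) * b0) * exp (- (norm \<omega> powr (2 * \<alpha>)))" for \<omega>
    have "integrable lborel g"
      unfolding g_def using integrable_weight[of 1] ball_finite
      by (intro Bochner_Integration.integrable_diff integrable_mult_right integrable_real_indicator) auto
    have "0 < a * exp (- t * a0) * V - M * exp (- (t - 1) * b0) * C"
    proof -
      have "M * exp (- (t - 1) * b0) * C = M * C * exp b0 * exp (- t * (b0 - a0)) * exp (- t * a0)"
        by (simp add: algebra_simps exp_add[symmetric])
      also have "\<dots> < a * V * exp (- t * a0)"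
        using elim by simp
      finally show ?thesis
        by (simp add: algebra_simps)
    qed
    also have "\<dots> = (\<integral>\<omega>. g \<omega> \<partial>lborel)"
      unfolding g_def V_def C_def using integrable_weight[of 1] ball_finite
      by (subst Bochner_Integration.integral_diff) (auto intro!: integrable_real_indicator)
    finally have "0 < (\<integral>\<omega>. g \<omega> \<partial>lborel)" .
    show ?case
    proof (intro allI impI)
      fix \<phi> :: "'a \<Rightarrow> real"
      assume measurable: "\<phi> \<in> borel_measurable lborel" and bounded: "\<forall>\<omega>. \<bar>\<phi> \<omega>\<bar> \<le> M"
        and near: "\<forall>\<omega>. norm \<omega> \<le> \<delta> \<longrightarrow> a \<le> \<phi> \<omega>"
      have "integrable lborel (\<lambda>\<omega>. exp (- t * norm \<omega> powr (2 * \<alpha>)) * \<phi> \<omega>)"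
      proof (rule Bochner_Integration.integrable_bound)
        show "integrable lborel (\<lambda>\<omega>::'a. M * exp (- t * norm \<omega> powr (2 * \<alpha>)))"
          using elim by (intro integrable_mult_right integrable_weight) simp
        show "(\<lambda>\<omega>. exp (- t * norm \<omega> powr (2 * \<alpha>)) * \<phi> \<omega>) \<in> borel_measurable lborel"
          using measurable by measurable
        show "AE \<omega> in lborel. norm (exp (- t * norm \<omega> powr (2 * \<alpha>)) * \<phi> \<omega>)
            \<le> norm (M * exp (- t * norm \<omega> powr (2 * \<alpha>)))"
          using bounded by (auto simp: abs_mult intro!: mult_left_mono order.trans[OF _ abs_ge_self])
      qed
      moreover have "g \<omega> \<le> exp (- t * norm \<omega> powr (2 * \<alpha>)) * \<phi> \<omega>" for \<omega>
        unfolding g_def a0_def b0_def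
        using assms elim bounded near by (intro exp_neg_norm_powr_mult_ge) auto
      ultimately show "0 < (\<integral>\<omega>. exp (- t * norm \<omega> powr (2 * \<alpha>)) * \<phi> \<omega> \<partial>lborel)"
        using \<open>0 < (\<integral>\<omega>. g \<omega> \<partial>lborel)\<close> \<open>integrable lborel g\<close> integral_mono
        by (smt (verit))
    qed
  qed
qed

lemma integrable_frac_heat_integrand:
  fixes u0 :: "'a::euclidean_space \<Rightarrow> real"
  assumes "\<alpha> > 0" "t > 0" "integrable lborel u0"
  shows "integrable lborel (\<lambda>\<omega>. complex_of_real (exp (- t * norm \<omega> powr (2 * \<alpha>))) * fourier u0 \<omega>
           * exp (\<i> * complex_of_real (\<omega> \<bullet> x)))"
proof (rule Bochner_Integration.integrable_bound)
  define M where "M = (2 * pi) powr (- real DIM('a) / 2) * (\<integral>x. \<bar>u0 x\<bar> \<partial>lborel)"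
  show "integrable lborel (\<lambda>\<omega>::'a. M * exp (- t * norm \<omega> powr (2 * \<alpha>)))"
    using assms by (intro integrable_mult_right integrable_exp_neg_norm_powr)
  show "(\<lambda>\<omega>. complex_of_real (exp (- t * norm \<omega> powr (2 * \<alpha>))) * fourier u0 \<omega>
      * exp (\<i> * complex_of_real (\<omega> \<bullet> x))) \<in> borel_measurable lborel"
    using borel_measurable_fourier[OF assms(3)] by measurable
  have "0 \<le> M"
    unfolding M_def by simp
  then show "AE \<omega> in lborel. norm (complex_of_real (exp (- t * norm \<omega> powr (2 * \<alpha>))) * fourier u0 \<omega>
      * exp (\<i> * complex_of_real (\<omega> \<bullet> x))) \<le> norm (M * exp (- t * norm \<omega> powr (2 * \<alpha>)))"
    using norm_fourier_le[of u0] unfolding M_def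
    by (auto simp: norm_mult mult.commute intro!: mult_left_mono)
qed

lemma Re_frac_heat_sol:
  fixes u0 :: "'a::euclidean_space \<Rightarrow> real"
  assumes "\<alpha> > 0" "t > 0" "integrable lborel u0"
  shows "Re (frac_heat_sol \<alpha> u0 t x) = (2 * pi) powr (- real DIM('a) / 2) *
           (\<integral>\<omega>. exp (- t * norm \<omega> powr (2 * \<alpha>)) * Re (fourier u0 \<omega> * exp (\<i> * complex_of_real (\<omega> \<bullet> x))) \<partial>lborel)"
  unfolding frac_heat_sol_def
  using integral_Re[OF integrable_frac_heat_integrand[OF assms, of x]]
  by (simp add: mult.assoc)

lemma Im_frac_heat_sol:
  fixes u0 :: "'a::euclidean_space \<Rightarrow> real"
  assumes "integrable lborel u0"
  shows "Im (frac_heat_sol \<alpha> u0 t x) = 0"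
proof -
  define h where "h \<omega> = complex_of_real (exp (- t * norm \<omega> powr (2 * \<alpha>))) * fourier u0 \<omega>
    * exp (\<i> * complex_of_real (\<omega> \<bullet> x))" for \<omega> :: 'a
  have "h \<in> borel_measurable borel"
    unfolding h_def using borel_measurable_fourier[OF assms] by measurable
  moreover have "h (- \<omega>) = cnj (h \<omega>)" for \<omega>
    unfolding h_def fourier_uminus by (simp add: exp_cnj inner_minus_left)
  ultimately have "(\<integral>\<omega>. h \<omega> \<partial>lborel) = cnj (\<integral>\<omega>. h \<omega> \<partial>lborel)"
    using integral_lborel_reflect[of h] by simp
  then have "Im (\<integral>\<omega>. h \<omega> \<partial>lborel) = 0"
    by (simp add: complex_eq_iff)
  then show ?thesis
    unfolding frac_heat_sol_def h_def by simp
qed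

theorem theorem2p1:
  fixes u0 :: "'a::euclidean_space \<Rightarrow> real" and \<alpha> :: real
  assumes "\<alpha> > 0"
    and "integrable lborel u0"
    and "integrable lborel (\<lambda>x. (u0 x)\<^sup>2)"
    and "(\<integral>x. u0 x \<partial>lborel) > 0"
  shows "\<forall>K::'a set. compact K \<longrightarrow>
           (\<exists>T\<ge>0. \<forall>t\<ge>T. \<forall>x\<in>K.
              Im (frac_heat_sol \<alpha> u0 t x) = 0 \<and> Re (frac_heat_sol \<alpha> u0 t x) > 0)"
proof (intro allI impI)
  fix K :: "'a set"
  assume "compact K"
  then obtain R where "R > 0" and R: "\<And>x. x \<in> K \<Longrightarrow> norm x \<le> R"
    using compact_imp_bounded bounded_pos by metis
  define c where "c = (2 * pi) powr (- real DIM('a) / 2)"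
  define A where "A = c * (\<integral>x. u0 x \<partial>lborel)"
  have "c > 0" "A > 0"
    unfolding A_def c_def using assms(4) by auto
  obtain \<delta> where "\<delta> > 0" and near:
    "\<And>\<omega> x. norm \<omega> \<le> \<delta> \<Longrightarrow> norm x \<le> R \<Longrightarrow> A / 2 \<le> Re (fourier u0 \<omega> * exp (\<i> * complex_of_real (\<omega> \<bullet> x)))"
    using Re_mult_exp_inner_ge_half[of "fourier u0" A R] continuous_on_fourier[OF assms(2)]
      fourier_0[of u0] \<open>A > 0\<close> \<open>R > 0\<close>
    unfolding A_def c_def by (auto simp: continuous_on_eq_continuous_at)
  define M where "M = c * (\<integral>x. \<bar>u0 x\<bar> \<partial>lborel)"
  have bounded: "\<bar>Re (fourier u0 \<omega> * exp (\<i> * complex_of_real (\<omega> \<bullet> x)))\<bar> \<le> M" for \<omega> x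
    using abs_Re_le_cmod[of "fourier u0 \<omega> * exp (\<i> * complex_of_real (\<omega> \<bullet> x))"] norm_fourier_le[of u0 \<omega>]
    unfolding M_def c_def by (simp add: norm_mult)
  have "A / 2 > 0"
    using \<open>A > 0\<close> by simp
  obtain T where T: "\<forall>t\<ge>T. \<forall>\<phi>::'a \<Rightarrow> real. \<phi> \<in> borel_measurable lborel \<longrightarrow> (\<forall>\<omega>. \<bar>\<phi> \<omega>\<bar> \<le> M) \<longrightarrow>
      (\<forall>\<omega>. norm \<omega> \<le> \<delta> \<longrightarrow> A / 2 \<le> \<phi> \<omega>) \<longrightarrow> 0 < (\<integral>\<omega>. exp (- t * norm \<omega> powr (2 * \<alpha>)) * \<phi> \<omega> \<partial>lborel)"
    using eventually_integral_exp_neg_norm_powr_mult_pos[OF assms(1) \<open>\<delta> > 0\<close> \<open>A / 2 > 0\<close>, of M]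
    unfolding eventually_at_top_linorder by blast
  show "\<exists>T\<ge>0. \<forall>t\<ge>T. \<forall>x\<in>K. Im (frac_heat_sol \<alpha> u0 t x) = 0 \<and> Re (frac_heat_sol \<alpha> u0 t x) > 0"
  proof (intro exI[of _ "max T 1"] conjI allI impI ballI)
    fix t x
    assume "max T 1 \<le> t" and "x \<in> K"
    show "Im (frac_heat_sol \<alpha> u0 t x) = 0"
      using assms(2) by (rule Im_frac_heat_sol)
    have "0 < (\<integral>\<omega>. exp (- t * norm \<omega> powr (2 * \<alpha>)) * Re (fourier u0 \<omega> * exp (\<i> * complex_of_real (\<omega> \<bullet> x))) \<partial>lborel)"
      using \<open>max T 1 \<le> t\<close> near R[OF \<open>x \<in> K\<close>] bounded borel_measurable_fourier[OF assms(2)]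
      by (intro T[rule_format]) auto
    then show "Re (frac_heat_sol \<alpha> u0 t x) > 0"
      using Re_frac_heat_sol[OF assms(1) _ assms(2)] \<open>max T 1 \<le> t\<close> \<open>c > 0\<close> unfolding c_def by simp
  qed simp
qed

end
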